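(* Let $\phi:\mathcal G\to\mathcal G'$ be a functor between groupoids which is injective on objects. Then there is a functor $\Upsilon_\phi:\mathcal H^r(\mathcal G)\to\mathcal H^r(\mathcal G')$ extending $\phi$, i.e. sending $H_{g_1}\diamond\dots\diamond H_{g_r}$ to $H_{\phi(g_1)}\diamond\dots\diamond H_{\phi(g_r)}$ and each generating morphism to the generating morphism of the same kind with labels transformed by $\phi$ (e.g. $m_{g,h}\mapsto m_{\phi(g),\phi(h)}$, $\eta_i\mapsto\eta_{\phi(i)}$, $v_g\mapsto v_{\phi(g)}$, $\gamma_{g,h}\mapsto\gamma_{\phi(g),\phi(h)}$). Moreover, if $\phi$ is also faithful (injective on morphisms), then $\Upsilon_\phi$ is faithful.
   Context: Groupoid conventions: a groupoid $\mathcal G$ is a small category in which every morphism is invertible; $\mathcal G$ also denotes its set of morphisms, $\mathcal G(i,j)$ those from $i$ to $j$. Composition left to right: $g\in\mathcal G(i,j)$, $h\in\mathcal G(j,k)$ give $gh\in\mathcal G(i,k)$; $1_i$ identity, $\bar g$ inverse. Braided monoidal categories: product $\diamond$, unit $\mathbf 1$, braiding $\gamma_{A,B}$, $\bar\gamma_{A,B}:=\gamma_{B,A}^{-1}$; constraints suppressed; $\mathrm{id}_g=\mathrm{id}_{H_g}$, $\gamma_{g,h}=\gamma_{H_g,H_h}$, $\bar\gamma_{g,h}=\bar\gamma_{H_g,H_h}$. $\mathcal H^r(\mathcal G)$ (universal ribbon Hopf $\mathcal G$-algebra) is the braided monoidal category freely generated by objects $H_g$ ($g\in\mathcal G$) and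 morphisms $\Delta_g:H_g\to H_g\diamond H_g$, $\epsilon_g:H_g\to\mathbf 1$, $m_{g,h}:H_g\diamond H_h\to H_{gh}$, $\eta_i:\mathbf 1\to H_{1_i}$, $S_g,\bar S_g:H_g\to H_{\bar g}$, $l_i:H_{1_i}\to\mathbf 1$, $L_g:\mathbf 1\to H_g$, $v_g,v_g^{-1}:H_g\to H_g$, subject to the following relations (for composable labels, $g\in\mathcal G(i,j)$): (Hopf) $\Delta$ coassociative; $(\epsilon_g\diamond\mathrm{id})\Delta_g=\mathrm{id}_g=(\mathrm{id}\diamond\epsilon_g)\Delta_g$; $m$ associative; $m_{g,1_j}(\mathrm{id}_g\diamond\eta_j)=\mathrm{id}_g=m_{1_i,g}(\eta_i\diamond\mathrm{id}_g)$; $(m_{g,h}\diamond m_{g,h})(\mathrm{id}_g\diamond\gamma_{g,h}\diamond\mathrm{id}_h)(\Delta_g\diamond\Delta_h)=\Delta_{gh}m_{g,h}$; $\epsilon_{gh}m_{g,h}=\epsilon_g\diamond\epsilon_h$; $\Delta_{1_i}\eta_i=\eta_i\diamond\eta_i$; $\epsilon_{1_i}\eta_i=\mathrm{id}_{\mathbf 1}$; $m_{\bar g,g}(S_g\diamond\mathrm{id}_g)\Delta_g=\eta_j\epsilon_g$; $m_{g,\bar g}(\mathrm{id}_g\diamond S_g)\Delta_g=\eta_i\epsilon_g$; $S_{\bar g}\bar S_g=\bar S_{\bar g}S_g=\mathrm{id}_g$. (Integrals) $(\mathrm{id}_{1_i}\diamond l_i)\Delta_{1_i}=\eta_il_i$;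 $m_{g,h}(L_g\diamond\mathrm{id}_h)=L_{gh}\epsilon_h$; $l_iL_{1_i}=\mathrm{id}_{\mathbf 1}=l_iS_{1_i}L_{1_i}$; $S_gL_g=L_{\bar g}$; $l_iS_{1_i}=l_i$. (Ribbon) $v_gv_g^{-1}=v_g^{-1}v_g=\mathrm{id}_g$; $\epsilon_gv_g=\epsilon_g$; $v_gL_g=L_g$; $S_gv_g=v_{\bar g}S_g$; $m_{g,h}(v_g\diamond\mathrm{id}_h)=v_{gh}m_{g,h}=m_{g,h}(\mathrm{id}_g\diamond v_h)$. Define $\sigma_{i,i}=(v_{1_i}^{-1}\diamond(v_{1_i}^{-1}S_{1_i}))\Delta_{1_i}v_{1_i}\eta_i$ and $\sigma_{i,j}=\eta_i\diamond\eta_j$ for $i\neq j$; for $g\in\mathcal G(p,q)$, $h\in\mathcal G(r,s)$, $k\in\mathrm{Obj}\,\mathcal G$ define $\mu_{g,h}=(m_{g,1_q}\diamond m_{1_r,h})(\mathrm{id}_g\diamond\sigma_{q,r}\diamond\mathrm{id}_h)$, $\rho^r_{g,k}=(m_{g,1_q}\diamond\mathrm{id}_{1_k})(\mathrm{id}_g\diamond\sigma_{q,k})$, $\rho^l_{g,k}=(\mathrm{id}_{1_k}\diamond m_{1_p,g})(\sigma_{k,p}\diamond\mathrm{id}_g)$. Required: each $\sigma_{i,j}$ is a Hopf copairing, i.e. $(\Delta_{1_i}\diamond\mathrm{id}_{1_j})\sigma_{i,j}=(\mathrm{id}_{1_i}\diamond\mathrm{id}_{1_i}\diamond m_{1_j,1_j})(\mathrm{id}_{1_i}\diamond\sigma_{i,j}\diamond\mathrm{id}_{1_j})\sigma_{i,j}$,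 $(\mathrm{id}_{1_i}\diamond\Delta_{1_j})\sigma_{i,j}=(m_{1_i,1_i}\diamond\mathrm{id}_{1_j}\diamond\mathrm{id}_{1_j})(\mathrm{id}_{1_i}\diamond\sigma_{i,j}\diamond\mathrm{id}_{1_j})\sigma_{i,j}$, $(\epsilon_{1_i}\diamond\mathrm{id}_{1_j})\sigma_{i,j}=\eta_j$, $(\mathrm{id}_{1_i}\diamond\epsilon_{1_j})\sigma_{i,j}=\eta_i$; $\Delta_gv_g^{-1}=\mu_{g,g}(v_g^{-1}\diamond v_g^{-1})\bar\gamma_{g,g}\Delta_g$ for all $g$; and for all $g\in\mathcal G(p,i)$, $h\in\mathcal G(j,s)$: $(m_{1_j,h}\diamond m_{g,1_i})(S_{1_j}\diamond(\mu_{h,g}\bar\gamma_{g,h}\mu_{g,h})\diamond S_{1_i})(\rho^l_{g,j}\diamond\rho^r_{h,i})=\gamma_{g,h}$. *)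

theory Defs
  imports Main
begin

record ('o, 'm) groupoid =
  Obj  :: "'o set"
  Mor  :: "'m set"
  dom  :: "'m \<Rightarrow> 'o"
  cod  :: "'m \<Rightarrow> 'o"
  comp :: "'m \<Rightarrow> 'm \<Rightarrow> 'm"   (* comp g h = gh for g in G(i,j), h in G(j,k) *)
  idm  :: "'o \<Rightarrow> 'm"
  inv  :: "'m \<Rightarrow> 'm"

definition is_groupoid :: "('o, 'm) groupoid \<Rightarrow> bool" where
  "is_groupoid G \<longleftrightarrow>
     (\<forall>g\<in>Mor G. dom G g \<in> Obj G \<and> cod G g \<in> Obj G) \<and>
     (\<forall>g\<in>Mor G. \<forall>h\<in>Mor G. cod G g = dom G h \<longrightarrow>
        comp G g h \<in> Mor G \<and> dom G (comp G g h) = dom G g \<and> cod G (comp G g h) = cod G h) \<and>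
     (\<forall>g\<in>Mor G. \<forall>h\<in>Mor G. \<forall>k\<in>Mor G. cod G g = dom G h \<longrightarrow> cod G h = dom G k \<longrightarrow>
        comp G (comp G g h) k = comp G g (comp G h k)) \<and>
     (\<forall>i\<in>Obj G. idm G i \<in> Mor G \<and> dom G (idm G i) = i \<and> cod G (idm G i) = i) \<and>
     (\<forall>g\<in>Mor G. comp G (idm G (dom G g)) g = g \<and> comp G g (idm G (cod G g)) = g) \<and>
     (\<forall>g\<in>Mor G. inv G g \<in> Mor G \<and> dom G (inv G g) = cod G g \<and> cod G (inv G g) = dom G g \<and>
        comp G g (inv G g) = idm G (dom G g) \<and> comp G (inv G g) g = idm G (cod G g))"

definition is_functor ::
  "('o, 'm) groupoid \<Rightarrow> ('p, 'n) groupoid \<Rightarrow> ('o \<Rightarrow> 'p) \<Rightarrow> ('m \<Rightarrow> 'n) \<Rightarrow> bool" where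
  "is_functor G G' Fo Fm \<longleftrightarrow>
     (\<forall>i\<in>Obj G. Fo i \<in> Obj G') \<and>
     (\<forall>g\<in>Mor G. Fm g \<in> Mor G' \<and> dom G' (Fm g) = Fo (dom G g) \<and> cod G' (Fm g) = Fo (cod G g)) \<and>
     (\<forall>g\<in>Mor G. \<forall>h\<in>Mor G. cod G g = dom G h \<longrightarrow> Fm (comp G g h) = comp G' (Fm g) (Fm h)) \<and>
     (\<forall>i\<in>Obj G. Fm (idm G i) = idm G' (Fo i))"

text \<open>Objects of H^r(G) are words H_{g1} <> ... <> H_{gr}, represented as lists of
  morphisms of G (the unit 1 is the empty list).  Morphisms are equivalence classes of
  well-formed terms.  f \<odot> g is the composite "f g" of the paper (first g, then f).\<close>

datatype ('o, 'm) tm =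
    Id "'m list"
  | Comp "('o, 'm) tm" "('o, 'm) tm"  (infixr "\<odot>" 55)
  | Tens "('o, 'm) tm" "('o, 'm) tm"  (infixr "\<diamond>" 60)
  | Br "'m list" "'m list"
  | BrInv "'m list" "'m list"
  | Delta 'm | Eps 'm | Mult 'm 'm | Eta 'o
  | S 'm | Sbar 'm | Lsm 'o | Lbig 'm | V 'm | Vinv 'm

fun src :: "('o, 'm) groupoid \<Rightarrow> ('o, 'm) tm \<Rightarrow> 'm list" where
  "src G (Id A) = A"
| "src G (f \<odot> g) = src G g"
| "src G (f \<diamond> g) = src G f @ src G g"
| "src G (Br A B) = A @ B"
| "src G (BrInv A B) = B @ A"
| "src G (Delta g) = [g]"
| "src G (Eps g) = [g]"
| "src G (Mult g h) = [g, h]"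
| "src G (Eta i) = []"
| "src G (S g) = [g]"
| "src G (Sbar g) = [g]"
| "src G (Lsm i) = [idm G i]"
| "src G (Lbig g) = []"
| "src G (V g) = [g]"
| "src G (Vinv g) = [g]"

fun trg :: "('o, 'm) groupoid \<Rightarrow> ('o, 'm) tm \<Rightarrow> 'm list" where
  "trg G (Id A) = A"
| "trg G (f \<odot> g) = trg G f"
| "trg G (f \<diamond> g) = trg G f @ trg G g"
| "trg G (Br A B) = B @ A"
| "trg G (BrInv A B) = A @ B"
| "trg G (Delta g) = [g, g]"
| "trg G (Eps g) = []"
| "trg G (Mult g h) = [comp G g h]"
| "trg G (Eta i) = [idm G i]"
| "trg G (S g) = [inv G g]"
| "trg G (Sbar g) = [inv G g]"
| "trg G (Lsm i) = []"
| "trg G (Lbig g) = [g]"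
| "trg G (V g) = [g]"
| "trg G (Vinv g) = [g]"

fun wf :: "('o, 'm) groupoid \<Rightarrow> ('o, 'm) tm \<Rightarrow> bool" where
  "wf G (Id A) = (set A \<subseteq> Mor G)"
| "wf G (f \<odot> g) = (wf G f \<and> wf G g \<and> trg G g = src G f)"
| "wf G (f \<diamond> g) = (wf G f \<and> wf G g)"
| "wf G (Br A B) = (set A \<subseteq> Mor G \<and> set B \<subseteq> Mor G)"
| "wf G (BrInv A B) = (set A \<subseteq> Mor G \<and> set B \<subseteq> Mor G)"
| "wf G (Delta g) = (g \<in> Mor G)"
| "wf G (Eps g) = (g \<in> Mor G)"
| "wf G (Mult g h) = (g \<in> Mor G \<and> h \<in> Mor G \<and> cod G g = dom G h)"
| "wf G (Eta i) = (i \<in> Obj G)"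
| "wf G (S g) = (g \<in> Mor G)"
| "wf G (Sbar g) = (g \<in> Mor G)"
| "wf G (Lsm i) = (i \<in> Obj G)"
| "wf G (Lbig g) = (g \<in> Mor G)"
| "wf G (V g) = (g \<in> Mor G)"
| "wf G (Vinv g) = (g \<in> Mor G)"

abbreviation ident :: "'m \<Rightarrow> ('o, 'm) tm" where "ident g \<equiv> Id [g]"

abbreviation BrBar :: "'m list \<Rightarrow> 'm list \<Rightarrow> ('o, 'm) tm" where
  "BrBar A B \<equiv> BrInv B A"   (* gamma-bar_{A,B} = gamma_{B,A}^{-1} : A<>B -> B<>A *)

definition sig :: "('o, 'm) groupoid \<Rightarrow> 'o \<Rightarrow> 'o \<Rightarrow> ('o, 'm) tm" where
  "sig G i j = (if i = j then
      (Vinv (idm G i) \<diamond> (Vinv (idm G i) \<odot> S (idm G i))) \<odot> Delta (idm G i) \<odot> V (idm G i) \<odot> Eta i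
    else Eta i \<diamond> Eta j)"

definition mu :: "('o, 'm) groupoid \<Rightarrow> 'm \<Rightarrow> 'm \<Rightarrow> ('o, 'm) tm" where
  "mu G g h = (Mult g (idm G (cod G g)) \<diamond> Mult (idm G (dom G h)) h)
      \<odot> (ident g \<diamond> sig G (cod G g) (dom G h) \<diamond> ident h)"

definition rho_r :: "('o, 'm) groupoid \<Rightarrow> 'm \<Rightarrow> 'o \<Rightarrow> ('o, 'm) tm" where
  "rho_r G g k = (Mult g (idm G (cod G g)) \<diamond> ident (idm G k)) \<odot> (ident g \<diamond> sig G (cod G g) k)"

definition rho_l :: "('o, 'm) groupoid \<Rightarrow> 'm \<Rightarrow> 'o \<Rightarrow> ('o, 'm) tm" where
  "rho_l G g k = (ident (idm G k) \<diamond> Mult (idm G (dom G g)) g) \<odot> (sig G k (dom G g) \<diamond> ident g)"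

text \<open>Axiom schemata: strict braided monoidal category axioms plus the relations of the
  universal ribbon Hopf G-algebra.  An instance is only used when both sides are
  well-formed with equal source and target (see hreq), which enforces composability.\<close>

inductive_set hr_ax :: "('o, 'm) groupoid \<Rightarrow> (('o, 'm) tm \<times> ('o, 'm) tm) set"
  for G :: "('o, 'm) groupoid" where
  c_assoc: "((f \<odot> g) \<odot> h, f \<odot> (g \<odot> h)) \<in> hr_ax G"
| c_idl: "(Id A \<odot> f, f) \<in> hr_ax G"
| c_idr: "(f \<odot> Id A, f) \<in> hr_ax G"
| t_assoc: "((f \<diamond> g) \<diamond> h, f \<diamond> (g \<diamond> h)) \<in> hr_ax G"
| t_unitl: "(Id [] \<diamond> f, f) \<in> hr_ax G"
| t_unitr: "(f \<diamond> Id [], f) \<in> hr_ax G"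
| t_id: "(Id A \<diamond> Id B, Id (A @ B)) \<in> hr_ax G"
| t_interchange: "((f \<odot> g) \<diamond> (f' \<odot> g'), (f \<diamond> f') \<odot> (g \<diamond> g')) \<in> hr_ax G"
| b_inv1: "(BrInv A B \<odot> Br A B, Id (A @ B)) \<in> hr_ax G"
| b_inv2: "(Br A B \<odot> BrInv A B, Id (B @ A)) \<in> hr_ax G"
| b_nat: "(Br (trg G f) (trg G g) \<odot> (f \<diamond> g), (g \<diamond> f) \<odot> Br (src G f) (src G g)) \<in> hr_ax G"
| b_hex1: "(Br A (B @ C), (Id B \<diamond> Br A C) \<odot> (Br A B \<diamond> Id C)) \<in> hr_ax G"
| b_hex2: "(Br (A @ B) C, (Br A C \<diamond> Id B) \<odot> (Id A \<diamond> Br B C)) \<in> hr_ax G"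
| h_coassoc: "((Delta g \<diamond> ident g) \<odot> Delta g, (ident g \<diamond> Delta g) \<odot> Delta g) \<in> hr_ax G"
| h_counitl: "((Eps g \<diamond> ident g) \<odot> Delta g, ident g) \<in> hr_ax G"
| h_counitr: "((ident g \<diamond> Eps g) \<odot> Delta g, ident g) \<in> hr_ax G"
| h_massoc: "(Mult (comp G g h) k \<odot> (Mult g h \<diamond> ident k),
              Mult g (comp G h k) \<odot> (ident g \<diamond> Mult h k)) \<in> hr_ax G"
| h_unitr: "(Mult g (idm G (cod G g)) \<odot> (ident g \<diamond> Eta (cod G g)), ident g) \<in> hr_ax G"
| h_unitl: "(Mult (idm G (dom G g)) g \<odot> (Eta (dom G g) \<diamond> ident g), ident g) \<in> hr_ax G"
| h_bialg: "((Mult g h \<diamond> Mult g h) \<odot> (ident g \<diamond> Br [g] [h] \<diamond> ident h) \<odot> (Delta g \<diamond> Delta h),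
             Delta (comp G g h) \<odot> Mult g h) \<in> hr_ax G"
| h_epsm: "(Eps (comp G g h) \<odot> Mult g h, Eps g \<diamond> Eps h) \<in> hr_ax G"
| h_deltaeta: "(Delta (idm G i) \<odot> Eta i, Eta i \<diamond> Eta i) \<in> hr_ax G"
| h_epseta: "(Eps (idm G i) \<odot> Eta i, Id []) \<in> hr_ax G"
| h_antipl: "(Mult (inv G g) g \<odot> (S g \<diamond> ident g) \<odot> Delta g, Eta (cod G g) \<odot> Eps g) \<in> hr_ax G"
| h_antipr: "(Mult g (inv G g) \<odot> (ident g \<diamond> S g) \<odot> Delta g, Eta (dom G g) \<odot> Eps g) \<in> hr_ax G"
| h_sinv1: "(S (inv G g) \<odot> Sbar g, ident g) \<in> hr_ax G"
| h_sinv2: "(Sbar (inv G g) \<odot> S g, ident g) \<in> hr_ax G"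
| i_left: "((ident (idm G i) \<diamond> Lsm i) \<odot> Delta (idm G i), Eta i \<odot> Lsm i) \<in> hr_ax G"
| i_right: "(Mult g h \<odot> (Lbig g \<diamond> ident h), Lbig (comp G g h) \<odot> Eps h) \<in> hr_ax G"
| i_norm1: "(Lsm i \<odot> Lbig (idm G i), Id []) \<in> hr_ax G"
| i_norm2: "(Lsm i \<odot> S (idm G i) \<odot> Lbig (idm G i), Id []) \<in> hr_ax G"
| i_SL: "(S g \<odot> Lbig g, Lbig (inv G g)) \<in> hr_ax G"
| i_lS: "(Lsm i \<odot> S (idm G i), Lsm i) \<in> hr_ax G"
| r_vinv1: "(V g \<odot> Vinv g, ident g) \<in> hr_ax G"
| r_vinv2: "(Vinv g \<odot> V g, ident g) \<in> hr_ax G"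
| r_epsv: "(Eps g \<odot> V g, Eps g) \<in> hr_ax G"
| r_vL: "(V g \<odot> Lbig g, Lbig g) \<in> hr_ax G"
| r_Sv: "(S g \<odot> V g, V (inv G g) \<odot> S g) \<in> hr_ax G"
| r_mv1: "(Mult g h \<odot> (V g \<diamond> ident h), V (comp G g h) \<odot> Mult g h) \<in> hr_ax G"
| r_mv2: "(Mult g h \<odot> (ident g \<diamond> V h), V (comp G g h) \<odot> Mult g h) \<in> hr_ax G"
| r_cop1: "((Delta (idm G i) \<diamond> ident (idm G j)) \<odot> sig G i j,
            (ident (idm G i) \<diamond> ident (idm G i) \<diamond> Mult (idm G j) (idm G j))
              \<odot> (ident (idm G i) \<diamond> sig G i j \<diamond> ident (idm G j)) \<odot> sig G i j) \<in> hr_ax G"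
| r_cop2: "((ident (idm G i) \<diamond> Delta (idm G j)) \<odot> sig G i j,
            (Mult (idm G i) (idm G i) \<diamond> ident (idm G j) \<diamond> ident (idm G j))
              \<odot> (ident (idm G i) \<diamond> sig G i j \<diamond> ident (idm G j)) \<odot> sig G i j) \<in> hr_ax G"
| r_cop3: "((Eps (idm G i) \<diamond> ident (idm G j)) \<odot> sig G i j, Eta j) \<in> hr_ax G"
| r_cop4: "((ident (idm G i) \<diamond> Eps (idm G j)) \<odot> sig G i j, Eta i) \<in> hr_ax G"
| r_twist: "(Delta g \<odot> Vinv g, mu G g g \<odot> (Vinv g \<diamond> Vinv g) \<odot> BrBar [g] [g] \<odot> Delta g) \<in> hr_ax G"
| r_braid: "((Mult (idm G (dom G h)) h \<diamond> Mult g (idm G (cod G g)))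
              \<odot> (S (idm G (dom G h)) \<diamond> (mu G h g \<odot> BrBar [g] [h] \<odot> mu G g h) \<diamond> S (idm G (cod G g)))
              \<odot> (rho_l G g (dom G h) \<diamond> rho_r G h (cod G g)),
            Br [g] [h]) \<in> hr_ax G"

inductive hreq :: "('o, 'm) groupoid \<Rightarrow> ('o, 'm) tm \<Rightarrow> ('o, 'm) tm \<Rightarrow> bool"
  for G :: "('o, 'm) groupoid" where
  ax: "(l, r) \<in> hr_ax G \<Longrightarrow> wf G l \<Longrightarrow> wf G r \<Longrightarrow> src G l = src G r \<Longrightarrow>
       trg G l = trg G r \<Longrightarrow> hreq G l r"
| refl: "wf G t \<Longrightarrow> hreq G t t"
| sym: "hreq G t u \<Longrightarrow> hreq G u t"
| trans: "hreq G t u \<Longrightarrow> hreq G u w \<Longrightarrow> hreq G t w"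
| comp_cong: "hreq G f f' \<Longrightarrow> hreq G g g' \<Longrightarrow> wf G (f \<odot> g) \<Longrightarrow> hreq G (f \<odot> g) (f' \<odot> g')"
| tens_cong: "hreq G f f' \<Longrightarrow> hreq G g g' \<Longrightarrow> hreq G (f \<diamond> g) (f' \<diamond> g')"

abbreviation Upsilon :: "('o \<Rightarrow> 'p) \<Rightarrow> ('m \<Rightarrow> 'n) \<Rightarrow> ('o, 'm) tm \<Rightarrow> ('p, 'n) tm" where
  "Upsilon Fo Fm \<equiv> map_tm Fo Fm"

end

theory Submission
  imports Defs
begin

text \<open>\<Upsilon> relabels every generator along \<phi>, and each defining relation of
  H^r(G) is sent to the corresponding relation of H^r(G'); injectivity on objects is
  needed only because \<sigma>_ij depends on whether i = j.

  For faithfulness we build a left inverse on terms. The morphisms of G' split into the image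
  of \<phi>, the outer morphisms (both end points outside the image) and the remaining stray ones.
  The retraction pulls image-labelled generators back along \<phi> and deletes outer-labelled
  ones; the terms touching a stray morphism form a union of classes. Every relation of
  H^r(G') retracts to an equation of H^r(G): if all its labels lie in the image it is
  the image of a relation of H^r(G), if all lie outside both sides retract to identities,
  and the mixed instances (\<sigma>_ij with i and j on different sides, and the braid
  relation for an image and an outer morphism) reduce to the unit and antipode axioms.\<close>

section \<open>Groupoids and functors\<close>

locale valid_groupoid =
  fixes G :: "('o, 'm) groupoid"
  assumes groupoid: "is_groupoid G"
begin

lemma dom_obj [simp]: "g \<in> Mor G \<Longrightarrow> groupoid.dom G g \<in> Obj G"
  and cod_obj [simp]: "g \<in> Mor G \<Longrightarrow> cod G g \<in> Obj G"
  using groupoid unfolding is_groupoid_def by blast+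

lemma comp_mor [simp]: "g \<in> Mor G \<Longrightarrow> h \<in> Mor G \<Longrightarrow> cod G g = groupoid.dom G h \<Longrightarrow> comp G g h \<in> Mor G"
  and dom_comp [simp]: "g \<in> Mor G \<Longrightarrow> h \<in> Mor G \<Longrightarrow> cod G g = groupoid.dom G h \<Longrightarrow>
    groupoid.dom G (comp G g h) = groupoid.dom G g"
  and cod_comp [simp]: "g \<in> Mor G \<Longrightarrow> h \<in> Mor G \<Longrightarrow> cod G g = groupoid.dom G h \<Longrightarrow>
    cod G (comp G g h) = cod G h"
  using groupoid unfolding is_groupoid_def by blast+

lemma comp_assoc: "g \<in> Mor G \<Longrightarrow> h \<in> Mor G \<Longrightarrow> k \<in> Mor G \<Longrightarrow>
    cod G g = groupoid.dom G h \<Longrightarrow> cod G h = groupoid.dom G k \<Longrightarrow>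
    comp G (comp G g h) k = comp G g (comp G h k)"
  using groupoid unfolding is_groupoid_def by blast

lemma idm_mor [simp]: "i \<in> Obj G \<Longrightarrow> idm G i \<in> Mor G"
  and dom_idm [simp]: "i \<in> Obj G \<Longrightarrow> groupoid.dom G (idm G i) = i"
  and cod_idm [simp]: "i \<in> Obj G \<Longrightarrow> cod G (idm G i) = i"
  and idm_comp [simp]: "g \<in> Mor G \<Longrightarrow> comp G (idm G (groupoid.dom G g)) g = g"
  and comp_idm [simp]: "g \<in> Mor G \<Longrightarrow> comp G g (idm G (cod G g)) = g"
  using groupoid unfolding is_groupoid_def by blast+

lemma inv_mor [simp]: "g \<in> Mor G \<Longrightarrow> inv G g \<in> Mor G"
  and dom_inv [simp]: "g \<in> Mor G \<Longrightarrow> groupoid.dom G (inv G g) = cod G g"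
  and cod_inv [simp]: "g \<in> Mor G \<Longrightarrow> cod G (inv G g) = groupoid.dom G g"
  and comp_inv [simp]: "g \<in> Mor G \<Longrightarrow> comp G g (inv G g) = idm G (groupoid.dom G g)"
  and inv_comp [simp]: "g \<in> Mor G \<Longrightarrow> comp G (inv G g) g = idm G (cod G g)"
  using groupoid unfolding is_groupoid_def by blast+

lemma inv_unique:
  assumes "g \<in> Mor G" "h \<in> Mor G" "groupoid.dom G h = cod G g"
    and "comp G g h = idm G (groupoid.dom G g)"
  shows "inv G g = h"
proof -
  have "inv G g = comp G (inv G g) (comp G g h)"
    using assms comp_idm[of "inv G g"] by simp
  also have "\<dots> = comp G (comp G (inv G g) g) h"
    by (rule comp_assoc[symmetric]) (simp_all add: assms)
  also have "\<dots> = h"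
    using assms idm_comp[of h] by simp
  finally show ?thesis .
qed

lemma idm_comp_idm [simp]: "i \<in> Obj G \<Longrightarrow> comp G (idm G i) (idm G i) = idm G i"
  using idm_comp[of "idm G i"] by simp

lemma inv_idm [simp]: "i \<in> Obj G \<Longrightarrow> inv G (idm G i) = idm G i"
  by (rule inv_unique) simp_all

lemma inv_inv [simp]: "g \<in> Mor G \<Longrightarrow> inv G (inv G g) = g"
  by (rule inv_unique) simp_all

lemma comp_inv_cancel: "g \<in> Mor G \<Longrightarrow> h \<in> Mor G \<Longrightarrow> cod G g = groupoid.dom G h \<Longrightarrow>
    comp G (comp G g h) (inv G h) = g"
  using comp_idm[of g] by (simp add: comp_assoc)

lemma wf_sig [simp]: "wf G (sig G i j) \<longleftrightarrow> i \<in> Obj G \<and> j \<in> Obj G"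
  by (auto simp: sig_def)

lemma src_sig [simp]: "src G (sig G i j) = []"
  and trg_sig [simp]: "trg G (sig G i j) = [idm G i, idm G j]"
  by (simp_all add: sig_def)

end

locale groupoid_functor = G: valid_groupoid G + G': valid_groupoid G'
  for G :: "('o, 'm) groupoid" and G' :: "('p, 'n) groupoid" +
  fixes Fo :: "'o \<Rightarrow> 'p" and Fm :: "'m \<Rightarrow> 'n"
  assumes functor_laws: "is_functor G G' Fo Fm"
begin

lemma obj_image [simp]: "i \<in> Obj G \<Longrightarrow> Fo i \<in> Obj G'"
  and mor_image [simp]: "g \<in> Mor G \<Longrightarrow> Fm g \<in> Mor G'"
  and dom_image [simp]: "g \<in> Mor G \<Longrightarrow> groupoid.dom G' (Fm g) = Fo (groupoid.dom G g)"
  and cod_image [simp]: "g \<in> Mor G \<Longrightarrow> cod G' (Fm g) = Fo (cod G g)"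
  and image_comp [simp]: "g \<in> Mor G \<Longrightarrow> h \<in> Mor G \<Longrightarrow> cod G g = groupoid.dom G h \<Longrightarrow>
    Fm (comp G g h) = comp G' (Fm g) (Fm h)"
  and image_idm [simp]: "i \<in> Obj G \<Longrightarrow> Fm (idm G i) = idm G' (Fo i)"
  using functor_laws unfolding is_functor_def by blast+

lemma image_inv [simp]: "g \<in> Mor G \<Longrightarrow> Fm (inv G g) = inv G' (Fm g)"
  by (rule G'.inv_unique[symmetric]) (simp_all flip: image_comp)

end

section \<open>Relabelling along a functor\<close>

context groupoid_functor
begin

lemma wf_Upsilon:
  "wf G t \<Longrightarrow> wf G' (Upsilon Fo Fm t) \<and> src G' (Upsilon Fo Fm t) = map Fm (src G t)
    \<and> trg G' (Upsilon Fo Fm t) = map Fm (trg G t)"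
  by (induction t) auto

end

locale object_injective_functor = groupoid_functor G G' Fo Fm
  for G :: "('o, 'm) groupoid" and G' :: "('p, 'n) groupoid" and Fo Fm +
  assumes inj_obj: "inj_on Fo (Obj G)"
begin

lemma Upsilon_sig [simp]:
  "i \<in> Obj G \<Longrightarrow> j \<in> Obj G \<Longrightarrow> Upsilon Fo Fm (sig G i j) = sig G' (Fo i) (Fo j)"
  using inj_obj unfolding sig_def inj_on_def by auto

lemma Upsilon_mu [simp]:
  "g \<in> Mor G \<Longrightarrow> h \<in> Mor G \<Longrightarrow> Upsilon Fo Fm (mu G g h) = mu G' (Fm g) (Fm h)"
  by (simp add: mu_def)

lemma Upsilon_rho_r [simp]:
  "g \<in> Mor G \<Longrightarrow> k \<in> Obj G \<Longrightarrow> Upsilon Fo Fm (rho_r G g k) = rho_r G' (Fm g) (Fo k)"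
  by (simp add: rho_r_def)

lemma Upsilon_rho_l [simp]:
  "g \<in> Mor G \<Longrightarrow> k \<in> Obj G \<Longrightarrow> Upsilon Fo Fm (rho_l G g k) = rho_l G' (Fm g) (Fo k)"
  by (simp add: rho_l_def)

lemma Upsilon_hr_ax:
  assumes "(l, r) \<in> hr_ax G" and "wf G l"
  shows "(Upsilon Fo Fm l, Upsilon Fo Fm r) \<in> hr_ax G'"
  using assms
proof (cases rule: hr_ax.cases)
  case (b_nat f g)
  then have "wf G f" "wf G g"
    using assms(2) by auto
  then show ?thesis
    using b_nat hr_ax.b_nat[where G=G' and f="Upsilon Fo Fm f" and g="Upsilon Fo Fm g"]
      wf_Upsilon[of f] wf_Upsilon[of g]
    by simp
next
  case (h_unitr g)
  with assms(2) show ?thesis using hr_ax.h_unitr[where G=G' and g="Fm g"] by auto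
next
  case (h_unitl g)
  with assms(2) show ?thesis using hr_ax.h_unitl[where G=G' and g="Fm g"] by auto
next
  case (h_antipl g)
  with assms(2) show ?thesis using hr_ax.h_antipl[where G=G' and g="Fm g"] by auto
next
  case (h_antipr g)
  with assms(2) show ?thesis using hr_ax.h_antipr[where G=G' and g="Fm g"] by auto
next
  case (r_braid h g)
  with assms(2) show ?thesis using hr_ax.r_braid[where G=G' and h="Fm h" and g="Fm g"] by auto
qed (auto intro: hr_ax.intros)

lemma hreq_Upsilon: "hreq G t u \<Longrightarrow> hreq G' (Upsilon Fo Fm t) (Upsilon Fo Fm u)"
proof (induction rule: hreq.induct)
  case (ax l r)
  then show ?case
    using Upsilon_hr_ax wf_Upsilon[of l] wf_Upsilon[of r] by (auto intro: hreq.ax)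
next
  case (refl t)
  then show ?case using wf_Upsilon[of t] by (auto intro: hreq.refl)
next
  case (comp_cong f f' g g')
  then show ?case using wf_Upsilon[of "f \<odot> g"] by (auto intro: hreq.comp_cong)
qed (auto intro: hreq.sym hreq.trans hreq.tens_cong)

end

section \<open>Derived equations in H^r(G)\<close>

lemmas [trans] = hreq.trans

lemma hreq_wf_src_trg: "hreq G t u \<Longrightarrow> wf G t \<and> wf G u \<and> src G t = src G u \<and> trg G t = trg G u"
  by (induction rule: hreq.induct) auto

lemma hreq_comp: "hreq G f f' \<Longrightarrow> hreq G g g' \<Longrightarrow> trg G g = src G f \<Longrightarrow> hreq G (f \<odot> g) (f' \<odot> g')"
  using hreq_wf_src_trg[of G f f'] hreq_wf_src_trg[of G g g'] by (auto intro: hreq.comp_cong)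

lemma hreq_comp_left: "hreq G f f' \<Longrightarrow> wf G g \<Longrightarrow> trg G g = src G f \<Longrightarrow> hreq G (f \<odot> g) (f' \<odot> g)"
  and hreq_comp_right: "wf G f \<Longrightarrow> hreq G g g' \<Longrightarrow> trg G g = src G f \<Longrightarrow> hreq G (f \<odot> g) (f \<odot> g')"
  by (simp_all add: hreq_comp hreq.refl)

lemma hreq_tens_left: "hreq G f f' \<Longrightarrow> wf G g \<Longrightarrow> hreq G (f \<diamond> g) (f' \<diamond> g)"
  and hreq_tens_right: "wf G f \<Longrightarrow> hreq G g g' \<Longrightarrow> hreq G (f \<diamond> g) (f \<diamond> g')"
  by (simp_all add: hreq.tens_cong hreq.refl)

lemma hreq_Id_comp: "wf G f \<Longrightarrow> set A \<subseteq> Mor G \<Longrightarrow> trg G f = A \<Longrightarrow> hreq G (Id A \<odot> f) f"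
  by (rule hreq.ax[OF hr_ax.c_idl]) auto

lemma hreq_comp_Id: "wf G f \<Longrightarrow> set A \<subseteq> Mor G \<Longrightarrow> src G f = A \<Longrightarrow> hreq G (f \<odot> Id A) f"
  by (rule hreq.ax[OF hr_ax.c_idr]) auto

lemma hreq_unit_tens: "wf G f \<Longrightarrow> hreq G (Id [] \<diamond> f) f"
  by (rule hreq.ax[OF hr_ax.t_unitl]) auto

lemma hreq_tens_unit: "wf G f \<Longrightarrow> hreq G (f \<diamond> Id []) f"
  by (rule hreq.ax[OF hr_ax.t_unitr]) auto

lemma hreq_comp_assoc: "wf G f \<Longrightarrow> wf G g \<Longrightarrow> wf G h \<Longrightarrow> trg G h = src G g \<Longrightarrow> trg G g = src G f \<Longrightarrow>
    hreq G ((f \<odot> g) \<odot> h) (f \<odot> (g \<odot> h))"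
  by (rule hreq.ax[OF hr_ax.c_assoc]) auto

lemma hreq_interchange: "wf G f \<Longrightarrow> wf G g \<Longrightarrow> wf G f' \<Longrightarrow> wf G g' \<Longrightarrow>
    trg G g = src G f \<Longrightarrow> trg G g' = src G f' \<Longrightarrow>
    hreq G ((f \<odot> g) \<diamond> (f' \<odot> g')) ((f \<diamond> f') \<odot> (g \<diamond> g'))"
  by (rule hreq.ax[OF hr_ax.t_interchange]) auto

lemma hreq_Id_tens_Id: "set A \<subseteq> Mor G \<Longrightarrow> set B \<subseteq> Mor G \<Longrightarrow> hreq G (Id A \<diamond> Id B) (Id (A @ B))"
  by (rule hreq.ax[OF hr_ax.t_id]) auto

lemma hreq_idempotent_invertible:
  assumes inverse: "hreq G (Y \<odot> X) (Id A)" and idempotent: "hreq G X (X \<odot> X)"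
  shows "hreq G X (Id A)"
proof -
  have "wf G (Y \<odot> X)" "src G X = A" "set A \<subseteq> Mor G"
    using hreq_wf_src_trg[OF inverse] by simp_all
  moreover have "trg G X = src G X"
    using hreq_wf_src_trg[OF idempotent] by simp
  ultimately have wf: "wf G X" "wf G Y" "trg G X = src G Y" "src G X = A" "trg G X = A"
    "set A \<subseteq> Mor G"
    by simp_all
  have "hreq G X (Id A \<odot> X)"
    using hreq.sym[OF hreq_Id_comp[of G X A]] wf by simp
  also have "hreq G (Id A \<odot> X) ((Y \<odot> X) \<odot> X)"
    using hreq_comp_left[OF hreq.sym[OF inverse]] wf by simp
  also have "hreq G ((Y \<odot> X) \<odot> X) (Y \<odot> (X \<odot> X))"
    using wf by (intro hreq_comp_assoc) simp_all
  also have "hreq G (Y \<odot> (X \<odot> X)) (Y \<odot> X)"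
    using hreq_comp_right[OF _ hreq.sym[OF idempotent]] wf by simp
  finally show ?thesis
    using inverse by (rule hreq.trans)
qed

lemma hreq_Br_Nil_right: "set A \<subseteq> Mor G \<Longrightarrow> hreq G (Br A []) (Id A)"
proof (rule hreq_idempotent_invertible)
  assume A: "set A \<subseteq> Mor G"
  then show "hreq G (BrInv A [] \<odot> Br A []) (Id A)"
    using hreq.ax[OF hr_ax.b_inv1[where A=A and B="[]"]] by simp
  have "hreq G (Br A []) ((Id [] \<diamond> Br A []) \<odot> (Br A [] \<diamond> Id []))"
    using A hreq.ax[OF hr_ax.b_hex1[where A=A and B="[]" and C="[]"]] by simp
  also have "hreq G ((Id [] \<diamond> Br A []) \<odot> (Br A [] \<diamond> Id [])) (Br A [] \<odot> Br A [])"
    using A by (intro hreq_comp hreq_unit_tens hreq_tens_unit) simp_all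
  finally show "hreq G (Br A []) (Br A [] \<odot> Br A [])" .
qed

lemma hreq_Br_Nil_left: "set A \<subseteq> Mor G \<Longrightarrow> hreq G (Br [] A) (Id A)"
proof (rule hreq_idempotent_invertible)
  assume A: "set A \<subseteq> Mor G"
  then show "hreq G (BrInv [] A \<odot> Br [] A) (Id A)"
    using hreq.ax[OF hr_ax.b_inv1[where A="[]" and B=A]] by simp
  have "hreq G (Br [] A) ((Br [] A \<diamond> Id []) \<odot> (Id [] \<diamond> Br [] A))"
    using A hreq.ax[OF hr_ax.b_hex2[where A="[]" and B="[]" and C=A]] by simp
  also have "hreq G ((Br [] A \<diamond> Id []) \<odot> (Id [] \<diamond> Br [] A)) (Br [] A \<odot> Br [] A)"
    using A by (intro hreq_comp hreq_unit_tens hreq_tens_unit) simp_all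
  finally show "hreq G (Br [] A) (Br [] A \<odot> Br [] A)" .
qed

lemma hreq_BrInv_Nil_right: "set A \<subseteq> Mor G \<Longrightarrow> hreq G (BrInv A []) (Id A)"
proof -
  assume A: "set A \<subseteq> Mor G"
  then have "hreq G (BrInv A []) (Id A \<odot> BrInv A [])"
    by (intro hreq.sym[OF hreq_Id_comp]) simp_all
  also have "hreq G (Id A \<odot> BrInv A []) (Br A [] \<odot> BrInv A [])"
    using A by (intro hreq_comp_left hreq.sym[OF hreq_Br_Nil_right]) simp_all
  also have "hreq G (Br A [] \<odot> BrInv A []) (Id A)"
    using A hreq.ax[OF hr_ax.b_inv2[where A=A and B="[]"]] by simp
  finally show ?thesis .
qed

lemma hreq_BrInv_Nil_left: "set A \<subseteq> Mor G \<Longrightarrow> hreq G (BrInv [] A) (Id A)"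
proof -
  assume A: "set A \<subseteq> Mor G"
  then have "hreq G (BrInv [] A) (BrInv [] A \<odot> Id A)"
    by (intro hreq.sym[OF hreq_comp_Id]) simp_all
  also have "hreq G (BrInv [] A \<odot> Id A) (BrInv [] A \<odot> Br [] A)"
    using A by (intro hreq_comp_right hreq.sym[OF hreq_Br_Nil_left]) simp_all
  also have "hreq G (BrInv [] A \<odot> Br [] A) (Id A)"
    using A hreq.ax[OF hr_ax.b_inv1[where A="[]" and B=A]] by simp
  finally show ?thesis .
qed

text \<open>Deleting generators leaves identity factors and braidings with an empty word behind;
  \<open>strip_ids\<close> removes them, so that the remaining equation can be compared syntactically.\<close>

fun is_Id :: "('o, 'm) tm \<Rightarrow> bool" where
  "is_Id (Id A) = True"
| "is_Id _ = False"

fun Id_word :: "('o, 'm) tm \<Rightarrow> 'm list" where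
  "Id_word (Id A) = A"
| "Id_word _ = []"

definition comp_ids :: "('o, 'm) tm \<Rightarrow> ('o, 'm) tm \<Rightarrow> ('o, 'm) tm" where
  "comp_ids a b = (if is_Id a then b else if is_Id b then a else a \<odot> b)"

definition tens_ids :: "('o, 'm) tm \<Rightarrow> ('o, 'm) tm \<Rightarrow> ('o, 'm) tm" where
  "tens_ids a b = (if is_Id a \<and> is_Id b then Id (Id_word a @ Id_word b)
     else if a = Id [] then b else if b = Id [] then a else a \<diamond> b)"

fun strip_ids :: "('o, 'm) tm \<Rightarrow> ('o, 'm) tm" where
  "strip_ids (f \<odot> g) = comp_ids (strip_ids f) (strip_ids g)"
| "strip_ids (f \<diamond> g) = tens_ids (strip_ids f) (strip_ids g)"
| "strip_ids (Br A B) = (if A = [] then Id B else if B = [] then Id A else Br A B)"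
| "strip_ids (BrInv A B) = (if A = [] then Id B else if B = [] then Id A else BrInv A B)"
| "strip_ids t = t"

lemma hreq_comp_ids:
  assumes "wf G a" "wf G b" "trg G b = src G a"
  shows "hreq G (a \<odot> b) (comp_ids a b)"
proof (cases "is_Id a")
  case True
  then obtain A where a: "a = Id A"
    by (cases a) auto
  have "hreq G (a \<odot> b) b"
    unfolding a by (rule hreq_Id_comp) (use assms a in simp_all)
  then show ?thesis
    using a by (simp add: comp_ids_def)
next
  case False
  show ?thesis
  proof (cases "is_Id b")
    case True
    then obtain B where b: "b = Id B"
      by (cases b) auto
    have "hreq G (a \<odot> b) a"
      unfolding b by (rule hreq_comp_Id) (use assms b in simp_all)
    then show ?thesis
      using \<open>\<not> is_Id a\<close> b by (simp add: comp_ids_def)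
  next
    case False
    then show ?thesis
      using assms \<open>\<not> is_Id a\<close> by (simp add: comp_ids_def hreq.refl)
  qed
qed

lemma hreq_tens_ids:
  assumes "wf G a" "wf G b"
  shows "hreq G (a \<diamond> b) (tens_ids a b)"
proof (cases "is_Id a \<and> is_Id b")
  case True
  then obtain A B where "a = Id A" "b = Id B"
    by (cases a; cases b) auto
  then show ?thesis
    using assms hreq_Id_tens_Id by (simp add: tens_ids_def)
next
  case False
  then show ?thesis
    using assms hreq_unit_tens[of G b] hreq_tens_unit[of G a] by (auto simp: tens_ids_def hreq.refl)
qed

lemma hreq_strip_ids: "wf G t \<Longrightarrow> hreq G t (strip_ids t)"
proof (induction t)
  case (Comp f g)
  then have "hreq G (f \<odot> g) (strip_ids f \<odot> strip_ids g)"
    by (simp add: hreq_comp)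
  also have "hreq G (strip_ids f \<odot> strip_ids g) (comp_ids (strip_ids f) (strip_ids g))"
    using Comp hreq_wf_src_trg by (intro hreq_comp_ids) fastforce+
  finally show ?case by simp
next
  case (Tens f g)
  then have "hreq G (f \<diamond> g) (strip_ids f \<diamond> strip_ids g)"
    by (simp add: hreq.tens_cong)
  also have "hreq G (strip_ids f \<diamond> strip_ids g) (tens_ids (strip_ids f) (strip_ids g))"
    using Tens hreq_wf_src_trg by (intro hreq_tens_ids) fastforce+
  finally show ?case by simp
qed (auto simp: hreq_Br_Nil_left hreq_Br_Nil_right hreq_BrInv_Nil_left hreq_BrInv_Nil_right
  intro: hreq.refl)

abbreviation unit_right :: "('o, 'm) groupoid \<Rightarrow> 'm \<Rightarrow> ('o, 'm) tm" where
  "unit_right G g \<equiv> Mult g (idm G (cod G g)) \<odot> (ident g \<diamond> Eta (cod G g))"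

abbreviation unit_left :: "('o, 'm) groupoid \<Rightarrow> 'm \<Rightarrow> ('o, 'm) tm" where
  "unit_left G g \<equiv> Mult (idm G (groupoid.dom G g)) g \<odot> (Eta (groupoid.dom G g) \<diamond> ident g)"

context valid_groupoid
begin

lemma wf_src_trg_mor: "wf G t \<Longrightarrow> set (src G t) \<subseteq> Mor G \<and> set (trg G t) \<subseteq> Mor G"
  by (induction t) auto

lemma hreq_tens_factor_right:
  assumes "wf G f" "wf G g" "src G g = []"
  shows "hreq G (f \<diamond> g) ((Id (trg G f) \<diamond> g) \<odot> f)"
proof -
  have "hreq G (f \<diamond> g) ((Id (trg G f) \<odot> f) \<diamond> (g \<odot> Id []))"
    using assms wf_src_trg_mor[of f]
    by (intro hreq.sym[OF hreq.tens_cong] hreq_Id_comp hreq_comp_Id) simp_all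
  also have "hreq G \<dots> ((Id (trg G f) \<diamond> g) \<odot> (f \<diamond> Id []))"
    using assms wf_src_trg_mor[of f] by (intro hreq_interchange) simp_all
  also have "hreq G \<dots> ((Id (trg G f) \<diamond> g) \<odot> f)"
    using assms wf_src_trg_mor[of f] by (intro hreq_comp_right hreq_tens_unit) simp_all
  finally show ?thesis .
qed

lemma hreq_tens_factor_left:
  assumes "wf G f" "wf G g" "src G f = []"
  shows "hreq G (f \<diamond> g) ((f \<diamond> Id (trg G g)) \<odot> g)"
proof -
  have "hreq G (f \<diamond> g) ((f \<odot> Id []) \<diamond> (Id (trg G g) \<odot> g))"
    using assms wf_src_trg_mor[of g]
    by (intro hreq.sym[OF hreq.tens_cong] hreq_Id_comp hreq_comp_Id) simp_all
  also have "hreq G \<dots> ((f \<diamond> Id (trg G g)) \<odot> (Id [] \<diamond> g))"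
    using assms wf_src_trg_mor[of g] by (intro hreq_interchange) simp_all
  also have "hreq G \<dots> ((f \<diamond> Id (trg G g)) \<odot> g)"
    using assms wf_src_trg_mor[of g] by (intro hreq_comp_right hreq_unit_tens) simp_all
  finally show ?thesis .
qed

lemma hreq_unit_right: "g \<in> Mor G \<Longrightarrow> hreq G (unit_right G g) (ident g)"
  by (rule hreq.ax[OF hr_ax.h_unitr]) simp_all

lemma hreq_unit_left: "g \<in> Mor G \<Longrightarrow> hreq G (unit_left G g) (ident g)"
  by (rule hreq.ax[OF hr_ax.h_unitl]) simp_all

context
  fixes k :: 'o
  assumes k: "k \<in> Obj G"
begin

lemma hreq_idm_unit_right:
  "hreq G (Mult (idm G k) (idm G k) \<odot> (ident (idm G k) \<diamond> Eta k)) (ident (idm G k))"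
  using hreq_unit_right[of "idm G k"] k by simp

lemma hreq_idm_unit_left:
  "hreq G (Mult (idm G k) (idm G k) \<odot> (Eta k \<diamond> ident (idm G k))) (ident (idm G k))"
  using hreq_unit_left[of "idm G k"] k by simp

lemma hreq_Mult_Eta_left:
  "hreq G (Mult (idm G k) (idm G k) \<odot> ((Eta k \<diamond> ident (idm G k)) \<odot> Eta k)) (Eta k)"
proof -
  let ?e = "idm G k"
  have "hreq G (Mult ?e ?e \<odot> ((Eta k \<diamond> ident ?e) \<odot> Eta k))
      ((Mult ?e ?e \<odot> (Eta k \<diamond> ident ?e)) \<odot> Eta k)"
    by (rule hreq.sym, rule hreq_comp_assoc) (simp_all add: k)
  also have "hreq G \<dots> (ident ?e \<odot> Eta k)"
    by (rule hreq_comp_left[OF hreq_idm_unit_left]) (simp_all add: k)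
  also have "hreq G \<dots> (Eta k)"
    by (rule hreq_Id_comp) (simp_all add: k)
  finally show ?thesis .
qed

lemma hreq_Mult_Eta_right:
  "hreq G (Mult (idm G k) (idm G k) \<odot> ((ident (idm G k) \<diamond> Eta k) \<odot> Eta k)) (Eta k)"
proof -
  let ?e = "idm G k"
  have "hreq G (Mult ?e ?e \<odot> ((ident ?e \<diamond> Eta k) \<odot> Eta k))
      ((Mult ?e ?e \<odot> (ident ?e \<diamond> Eta k)) \<odot> Eta k)"
    by (rule hreq.sym, rule hreq_comp_assoc) (simp_all add: k)
  also have "hreq G \<dots> (ident ?e \<odot> Eta k)"
    by (rule hreq_comp_left[OF hreq_idm_unit_right]) (simp_all add: k)
  also have "hreq G \<dots> (Eta k)"
    by (rule hreq_Id_comp) (simp_all add: k)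
  finally show ?thesis .
qed

lemma hreq_Delta_Eta: "hreq G (Delta (idm G k) \<odot> Eta k) (Eta k \<diamond> Eta k)"
  using hreq.ax[OF hr_ax.h_deltaeta[where G=G and i=k]] k by simp

lemma hreq_Delta_Eta_right:
  "hreq G (Delta (idm G k) \<odot> Eta k) ((ident (idm G k) \<diamond> Eta k) \<odot> Eta k)"
  using hreq_Delta_Eta hreq_tens_factor_right[of "Eta k" "Eta k"] k by (auto intro: hreq.trans)

lemma hreq_Delta_Eta_left:
  "hreq G (Delta (idm G k) \<odot> Eta k) ((Eta k \<diamond> ident (idm G k)) \<odot> Eta k)"
  using hreq_Delta_Eta hreq_tens_factor_left[of "Eta k" "Eta k"] k by (auto intro: hreq.trans)

lemma hreq_Eps_Eta: "hreq G (Eps (idm G k) \<odot> Eta k) (Id [])"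
  using hreq.ax[OF hr_ax.h_epseta[where G=G and i=k]] k by simp

text \<open>Insert the unit axiom, then use \<open>\<Delta>\<eta> = \<eta> \<diamond> \<eta>\<close> to recognise the left antipode
  axiom applied to \<open>\<eta>\<close>.\<close>

lemma hreq_S_Eta: "hreq G (S (idm G k) \<odot> Eta k) (Eta k)"
proof -
  let ?e = "idm G k" and ?s = "S (idm G k) \<odot> Eta k"
  have "hreq G ?s (Id [?e] \<odot> ?s)"
    by (rule hreq.sym, rule hreq_Id_comp) (simp_all add: k)
  also have "hreq G \<dots> ((Mult ?e ?e \<odot> (ident ?e \<diamond> Eta k)) \<odot> ?s)"
    by (rule hreq_comp_left[OF hreq.sym[OF hreq_idm_unit_right]]) (simp_all add: k)
  also have "hreq G \<dots> (Mult ?e ?e \<odot> ((ident ?e \<diamond> Eta k) \<odot> ?s))"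
    by (rule hreq_comp_assoc) (simp_all add: k)
  also have "hreq G \<dots> (Mult ?e ?e \<odot> (?s \<diamond> Eta k))"
    using hreq.sym[OF hreq_tens_factor_right[of ?s "Eta k"]] k by (intro hreq_comp_right) simp_all
  also have "hreq G \<dots> (Mult ?e ?e \<odot> ((S ?e \<diamond> ident ?e) \<odot> (Eta k \<diamond> Eta k)))"
  proof (rule hreq_comp_right)
    have "hreq G (?s \<diamond> Eta k) (?s \<diamond> (ident ?e \<odot> Eta k))"
      by (rule hreq_tens_right, simp add: k, rule hreq.sym, rule hreq_Id_comp) (simp_all add: k)
    also have "hreq G \<dots> ((S ?e \<diamond> ident ?e) \<odot> (Eta k \<diamond> Eta k))"
      by (rule hreq_interchange) (simp_all add: k)
    finally show "hreq G (?s \<diamond> Eta k) ((S ?e \<diamond> ident ?e) \<odot> (Eta k \<diamond> Eta k))" .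
  qed (simp_all add: k)
  also have "hreq G \<dots> (Mult ?e ?e \<odot> ((S ?e \<diamond> ident ?e) \<odot> (Delta ?e \<odot> Eta k)))"
    by (rule hreq_comp_right, simp add: k, rule hreq_comp_right, simp add: k,
        rule hreq.sym[OF hreq_Delta_Eta]) (simp_all add: k)
  also have "hreq G \<dots> ((Mult ?e ?e \<odot> (S ?e \<diamond> ident ?e) \<odot> Delta ?e) \<odot> Eta k)"
    by (rule hreq.sym, rule hreq.trans[OF hreq_comp_assoc hreq_comp_right[OF _ hreq_comp_assoc]])
      (simp_all add: k)
  also have "hreq G \<dots> ((Eta k \<odot> Eps ?e) \<odot> Eta k)"
    using hreq.ax[OF hr_ax.h_antipl[where G=G and g="?e"]] k by (intro hreq_comp_left) simp_all
  also have "hreq G \<dots> (Eta k \<odot> Id [])"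
    using hreq_Eps_Eta by (intro hreq.trans[OF hreq_comp_assoc hreq_comp_right]) (simp_all add: k)
  also have "hreq G \<dots> (Eta k)"
    by (rule hreq_comp_Id) (simp_all add: k)
  finally show ?thesis .
qed
end

text \<open>What the braid relation becomes once the generators labelled by one of its two morphisms
  are deleted; it follows from the unit and antipode axioms.\<close>

lemma hreq_braid_collapse_left:
  assumes a: "a \<in> Mor G"
  defines "j \<equiv> groupoid.dom G a"
  shows "hreq G (Mult (idm G j) a \<odot> (S (idm G j) \<diamond> (unit_right G a \<odot> unit_left G a))
      \<odot> (Eta j \<diamond> unit_right G a)) (ident a)"
proof -
  have j: "j \<in> Obj G"
    using a unfolding j_def by simp
  have aa: "hreq G (ident a \<odot> ident a) (ident a)"
    by (rule hreq_Id_comp) (simp_all add: a)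
  have "hreq G (Mult (idm G j) a \<odot> (S (idm G j) \<diamond> (unit_right G a \<odot> unit_left G a))
      \<odot> (Eta j \<diamond> unit_right G a))
      (Mult (idm G j) a \<odot> (S (idm G j) \<diamond> ident a) \<odot> (Eta j \<diamond> ident a))"
    using a j unfolding j_def
    by (intro hreq_comp_right hreq_comp hreq_tens_right hreq_unit_right
        hreq.trans[OF hreq_comp[OF hreq_unit_right hreq_unit_left] aa]) simp_all
  also have "hreq G \<dots> (Mult (idm G j) a \<odot> ((S (idm G j) \<odot> Eta j) \<diamond> (ident a \<odot> ident a)))"
    using a j unfolding j_def by (intro hreq_comp_right hreq.sym[OF hreq_interchange]) simp_all
  also have "hreq G \<dots> (unit_left G a)"
    using a j unfolding j_def by (intro hreq_comp_right hreq.tens_cong[OF hreq_S_Eta aa]) simp_all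
  also have "hreq G \<dots> (ident a)"
    using a by (rule hreq_unit_left)
  finally show ?thesis .
qed

lemma hreq_braid_collapse_right:
  assumes a: "a \<in> Mor G"
  defines "c \<equiv> cod G a"
  shows "hreq G (Mult a (idm G c) \<odot> ((unit_left G a \<odot> unit_right G a) \<diamond> S (idm G c))
      \<odot> (unit_left G a \<diamond> Eta c)) (ident a)"
proof -
  have c: "c \<in> Obj G"
    using a unfolding c_def by simp
  have aa: "hreq G (ident a \<odot> ident a) (ident a)"
    by (rule hreq_Id_comp) (simp_all add: a)
  have "hreq G (Mult a (idm G c) \<odot> ((unit_left G a \<odot> unit_right G a) \<diamond> S (idm G c))
      \<odot> (unit_left G a \<diamond> Eta c))
      (Mult a (idm G c) \<odot> (ident a \<diamond> S (idm G c)) \<odot> (ident a \<diamond> Eta c))"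
    using a c unfolding c_def
    by (intro hreq_comp_right hreq_comp hreq_tens_left hreq_unit_left
        hreq.trans[OF hreq_comp[OF hreq_unit_left hreq_unit_right] aa]) simp_all
  also have "hreq G \<dots> (Mult a (idm G c) \<odot> ((ident a \<odot> ident a) \<diamond> (S (idm G c) \<odot> Eta c)))"
    using a c unfolding c_def by (intro hreq_comp_right hreq.sym[OF hreq_interchange]) simp_all
  also have "hreq G \<dots> (unit_right G a)"
    using a c unfolding c_def by (intro hreq_comp_right hreq.tens_cong[OF aa hreq_S_Eta]) simp_all
  also have "hreq G \<dots> (ident a)"
    using a by (rule hreq_unit_right)
  finally show ?thesis .
qed

end

section \<open>A retraction onto H^r(G)\<close>

lemma set_tm_sig [simp]:
  "set1_tm (sig G i j) = {i, j}"
  "set2_tm (sig G i j) = (if i = j then {idm G i} else {})"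
  by (auto simp: sig_def)

lemma set_tm_mu [simp]:
  "set1_tm (mu G g h) = {cod G g, groupoid.dom G h}"
  "set2_tm (mu G g h) = {g, h, idm G (cod G g), idm G (groupoid.dom G h)}"
  by (auto simp: mu_def)

lemma set_tm_rho_r [simp]:
  "set1_tm (rho_r G g k) = {cod G g, k}"
  "set2_tm (rho_r G g k) = {g, idm G (cod G g), idm G k}"
  by (auto simp: rho_r_def)

lemma set_tm_rho_l [simp]:
  "set1_tm (rho_l G g k) = {k, groupoid.dom G g}"
  "set2_tm (rho_l G g k) = {idm G k, idm G (groupoid.dom G g), g}"
  by (auto simp: rho_l_def)

locale faithful_embedding = object_injective_functor G G' Fo Fm
  for G :: "('o, 'm) groupoid" and G' :: "('p, 'n) groupoid" and Fo Fm +
  assumes inj_mor: "inj_on Fm (Mor G)"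
begin

definition image_obj where
  "image_obj = Fo ` Obj G"

definition image_mor where
  "image_mor = Fm ` Mor G"

definition pull_obj where
  "pull_obj = inv_into (Obj G) Fo"

definition pull_mor where
  "pull_mor = inv_into (Mor G) Fm"

definition outer_mor where
  "outer_mor = {n \<in> Mor G'. groupoid.dom G' n \<notin> image_obj \<and> cod G' n \<notin> image_obj}"

definition stray where
  "stray n \<longleftrightarrow> n \<notin> image_mor \<and> n \<notin> outer_mor"

lemma image_obj_image [simp]: "i \<in> Obj G \<Longrightarrow> Fo i \<in> image_obj"
  and image_mor_image [simp]: "g \<in> Mor G \<Longrightarrow> Fm g \<in> image_mor"
  by (simp_all add: image_obj_def image_mor_def)

lemma pull_obj_image [simp]: "i \<in> Obj G \<Longrightarrow> pull_obj (Fo i) = i"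
  using inj_obj by (simp add: pull_obj_def)

lemma pull_mor_image [simp]: "g \<in> Mor G \<Longrightarrow> pull_mor (Fm g) = g"
  using inj_mor by (simp add: pull_mor_def)

lemma image_objE: "i \<in> image_obj \<Longrightarrow> (\<And>a. a \<in> Obj G \<Longrightarrow> i = Fo a \<Longrightarrow> thesis) \<Longrightarrow> thesis"
  and image_morE: "n \<in> image_mor \<Longrightarrow> (\<And>a. a \<in> Mor G \<Longrightarrow> n = Fm a \<Longrightarrow> thesis) \<Longrightarrow> thesis"
  unfolding image_obj_def image_mor_def by blast+

lemma pull_obj [simp]: "i \<in> image_obj \<Longrightarrow> pull_obj i \<in> Obj G"
  and image_pull_obj [simp]: "i \<in> image_obj \<Longrightarrow> Fo (pull_obj i) = i"
  and image_obj_obj [simp]: "i \<in> image_obj \<Longrightarrow> i \<in> Obj G'"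
  by (auto elim: image_objE)

lemma pull_mor [simp]: "n \<in> image_mor \<Longrightarrow> pull_mor n \<in> Mor G"
  and image_pull_mor [simp]: "n \<in> image_mor \<Longrightarrow> Fm (pull_mor n) = n"
  and image_mor_mor [simp]: "n \<in> image_mor \<Longrightarrow> n \<in> Mor G'"
  and dom_image_mor [simp]: "n \<in> image_mor \<Longrightarrow> groupoid.dom G' n \<in> image_obj"
  and cod_image_mor [simp]: "n \<in> image_mor \<Longrightarrow> cod G' n \<in> image_obj"
  and dom_pull_mor [simp]:
    "n \<in> image_mor \<Longrightarrow> groupoid.dom G (pull_mor n) = pull_obj (groupoid.dom G' n)"
  and cod_pull_mor [simp]: "n \<in> image_mor \<Longrightarrow> cod G (pull_mor n) = pull_obj (cod G' n)"
  and inv_image_mor [simp]: "n \<in> image_mor \<Longrightarrow> inv G' n \<in> image_mor"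
  and pull_mor_inv [simp]: "n \<in> image_mor \<Longrightarrow> pull_mor (inv G' n) = inv G (pull_mor n)"
  by (auto elim!: image_morE simp flip: image_inv)

lemma idm_image_obj [simp]: "i \<in> image_obj \<Longrightarrow> idm G' i \<in> image_mor"
  and pull_mor_idm [simp]: "i \<in> image_obj \<Longrightarrow> pull_mor (idm G' i) = idm G (pull_obj i)"
  by (auto elim!: image_objE simp flip: image_idm)

lemma comp_image_mor [simp]:
  assumes "g \<in> image_mor" "h \<in> image_mor" "cod G' g = groupoid.dom G' h"
  shows "comp G' g h \<in> image_mor"
    and "pull_mor (comp G' g h) = comp G (pull_mor g) (pull_mor h)"
proof -
  have c: "cod G (pull_mor g) = groupoid.dom G (pull_mor h)"
    using assms by simp
  then have m: "comp G (pull_mor g) (pull_mor h) \<in> Mor G"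
    using assms by simp
  have e: "comp G' g h = Fm (comp G (pull_mor g) (pull_mor h))"
    using assms c by simp
  show "comp G' g h \<in> image_mor" "pull_mor (comp G' g h) = comp G (pull_mor g) (pull_mor h)"
    unfolding e using m by simp_all
qed

lemma idm_outer_mor [simp]: "i \<in> Obj G' \<Longrightarrow> i \<notin> image_obj \<Longrightarrow> idm G' i \<in> outer_mor"
  and comp_outer_mor [simp]: "g \<in> outer_mor \<Longrightarrow> h \<in> outer_mor \<Longrightarrow> cod G' g = groupoid.dom G' h \<Longrightarrow>
    comp G' g h \<in> outer_mor"
  and inv_outer_mor [simp]: "g \<in> outer_mor \<Longrightarrow> inv G' g \<in> outer_mor"
  by (auto simp: outer_mor_def)

lemma outer_mor_mor [simp]: "n \<in> outer_mor \<Longrightarrow> n \<in> Mor G'"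
  and dom_outer_mor [simp]: "n \<in> outer_mor \<Longrightarrow> groupoid.dom G' n \<notin> image_obj"
  and cod_outer_mor [simp]: "n \<in> outer_mor \<Longrightarrow> cod G' n \<notin> image_obj"
  and outer_mor_not_image [simp]: "n \<in> outer_mor \<Longrightarrow> n \<notin> image_mor"
  unfolding outer_mor_def using dom_image_mor by blast+

lemma idm_image_mor_iff [simp]: "i \<in> Obj G' \<Longrightarrow> idm G' i \<in> image_mor \<longleftrightarrow> i \<in> image_obj"
  by (metis G'.dom_idm dom_image_mor idm_image_obj)

lemma idm_outer_mor_iff: "i \<in> Obj G' \<Longrightarrow> idm G' i \<in> outer_mor \<longleftrightarrow> i \<notin> image_obj"
  by (metis G'.dom_idm dom_outer_mor idm_outer_mor)

lemma inv_image_mor_iff [simp]: "g \<in> Mor G' \<Longrightarrow> inv G' g \<in> image_mor \<longleftrightarrow> g \<in> image_mor"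
  and inv_outer_mor_iff [simp]: "g \<in> Mor G' \<Longrightarrow> inv G' g \<in> outer_mor \<longleftrightarrow> g \<in> outer_mor"
  by (metis G'.inv_inv inv_image_mor, metis G'.inv_inv inv_outer_mor)

lemma image_outer_not_composable [simp]:
  "g \<in> image_mor \<Longrightarrow> h \<in> outer_mor \<Longrightarrow> cod G' g \<noteq> groupoid.dom G' h"
  "g \<in> outer_mor \<Longrightarrow> h \<in> image_mor \<Longrightarrow> cod G' g \<noteq> groupoid.dom G' h"
  by (metis cod_image_mor dom_outer_mor, metis cod_outer_mor dom_image_mor)

lemma image_obj_neq:
  "x \<in> image_obj \<Longrightarrow> y \<notin> image_obj \<Longrightarrow> x \<noteq> y"
  "x \<in> image_obj \<Longrightarrow> y \<notin> image_obj \<Longrightarrow> y \<noteq> x"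
  by auto

lemma image_mor_cancel:
  assumes "h \<in> image_mor" "g \<in> Mor G'" "cod G' g = groupoid.dom G' h" "comp G' g h \<in> image_mor"
  shows "g \<in> image_mor"
proof -
  have "comp G' (comp G' g h) (inv G' h) \<in> image_mor"
    by (rule comp_image_mor(1)) (use assms in simp_all)
  then show ?thesis
    using assms by (simp add: G'.comp_inv_cancel)
qed

lemma outer_mor_cancel:
  "h \<in> outer_mor \<Longrightarrow> g \<in> Mor G' \<Longrightarrow> cod G' g = groupoid.dom G' h \<Longrightarrow> comp G' g h \<in> outer_mor \<Longrightarrow>
    g \<in> outer_mor"
  unfolding outer_mor_def by auto

lemma stray_cases: "stray n \<or> n \<in> image_mor \<or> n \<in> outer_mor"
  and not_stray_image [simp]: "n \<in> image_mor \<Longrightarrow> \<not> stray n"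
  and not_stray_outer [simp]: "n \<in> outer_mor \<Longrightarrow> \<not> stray n"
  by (auto simp: stray_def)

definition retract_word :: "'n list \<Rightarrow> 'm list" where
  "retract_word A = map pull_mor (filter (\<lambda>n. n \<in> image_mor) A)"

lemma retract_word_simps [simp]:
  "retract_word [] = []"
  "retract_word (n # A) = (if n \<in> image_mor then pull_mor n # retract_word A else retract_word A)"
  "retract_word (A @ B) = retract_word A @ retract_word B"
  "set (retract_word A) \<subseteq> Mor G"
  by (auto simp: retract_word_def)

lemma retract_word_image: "set A \<subseteq> Mor G \<Longrightarrow> retract_word (map Fm A) = A"
  by (induction A) auto

text \<open>The retraction is only meaningful on terms that do not touch a stray morphism.\<close>

primrec retract :: "('p, 'n) tm \<Rightarrow> ('o, 'm) tm" where
  "retract (Id A) = Id (retract_word A)"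
| "retract (f \<odot> g) = retract f \<odot> retract g"
| "retract (f \<diamond> g) = retract f \<diamond> retract g"
| "retract (Br A B) = Br (retract_word A) (retract_word B)"
| "retract (BrInv A B) = BrInv (retract_word A) (retract_word B)"
| "retract (Delta g) = (if g \<in> image_mor then Delta (pull_mor g) else Id [])"
| "retract (Eps g) = (if g \<in> image_mor then Eps (pull_mor g) else Id [])"
| "retract (Mult g h) =
    (if g \<in> image_mor \<and> h \<in> image_mor then Mult (pull_mor g) (pull_mor h) else Id [])"
| "retract (Eta i) = (if i \<in> image_obj then Eta (pull_obj i) else Id [])"
| "retract (S g) = (if g \<in> image_mor then S (pull_mor g) else Id [])"
| "retract (Sbar g) = (if g \<in> image_mor then Sbar (pull_mor g) else Id [])"
| "retract (Lsm i) = (if i \<in> image_obj then Lsm (pull_obj i) else Id [])"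
| "retract (Lbig g) = (if g \<in> image_mor then Lbig (pull_mor g) else Id [])"
| "retract (V g) = (if g \<in> image_mor then V (pull_mor g) else Id [])"
| "retract (Vinv g) = (if g \<in> image_mor then Vinv (pull_mor g) else Id [])"

fun touches_stray :: "('p, 'n) tm \<Rightarrow> bool" where
  "touches_stray (f \<odot> g) \<longleftrightarrow> touches_stray f \<or> touches_stray g"
| "touches_stray (f \<diamond> g) \<longleftrightarrow> touches_stray f \<or> touches_stray g"
| "touches_stray t \<longleftrightarrow> list_ex stray (src G' t @ trg G' t)"

lemma touches_strayI: "list_ex stray (src G' t @ trg G' t) \<Longrightarrow> touches_stray t"
  by (induction t) auto

lemma wf_retract:
  "wf G' t \<Longrightarrow> \<not> touches_stray t \<Longrightarrow>
    wf G (retract t) \<and> src G (retract t) = retract_word (src G' t)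
    \<and> trg G (retract t) = retract_word (trg G' t)"
proof (induction t)
  case (Mult g h)
  then show ?case
    using stray_cases[of g] stray_cases[of h] by (auto simp: list_ex_iff)
qed (use stray_cases in \<open>auto simp: list_ex_iff\<close>)

lemma retract_Upsilon:
  "wf G t \<Longrightarrow> \<not> touches_stray (Upsilon Fo Fm t) \<and> retract (Upsilon Fo Fm t) = t"
  by (induction t) (auto simp: list_ex_iff retract_word_image simp flip: image_comp)

text \<open>Relations of G' labelled in the image of \<phi> are pulled back to relations of G by the
  inverse functor on the image subgroupoid.\<close>

definition image_groupoid where
  "image_groupoid = G'\<lparr>Obj := image_obj, Mor := image_mor\<rparr>"

lemma image_groupoid_simps [simp]:
  "Obj image_groupoid = image_obj" "Mor image_groupoid = image_mor"
  "groupoid.dom image_groupoid = groupoid.dom G'" "cod image_groupoid = cod G'"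
  "comp image_groupoid = comp G'" "idm image_groupoid = idm G'" "inv image_groupoid = inv G'"
  by (simp_all add: image_groupoid_def)

lemma pull_functor: "object_injective_functor image_groupoid G pull_obj pull_mor"
proof unfold_locales
  show "is_groupoid image_groupoid"
    unfolding is_groupoid_def by (auto simp: G'.comp_assoc)
  show "is_functor image_groupoid G pull_obj pull_mor"
    unfolding is_functor_def by simp
  show "inj_on pull_obj (Obj image_groupoid)"
    by (metis image_groupoid_simps(1) image_pull_obj inj_onI)
qed

definition image_labelled :: "('p, 'n) tm \<Rightarrow> bool" where
  "image_labelled t \<longleftrightarrow> set1_tm t \<subseteq> image_obj \<and> set2_tm t \<subseteq> image_mor"

definition outer_labelled :: "('p, 'n) tm \<Rightarrow> bool" where
  "outer_labelled t \<longleftrightarrow> set1_tm t \<subseteq> Obj G' - image_obj \<and> set2_tm t \<subseteq> outer_mor"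

lemma src_image_groupoid [simp]: "src image_groupoid t = src G' t"
  and trg_image_groupoid [simp]: "trg image_groupoid t = trg G' t"
  by (induction t) auto

lemma wf_image_groupoid: "wf G' t \<Longrightarrow> image_labelled t \<Longrightarrow> wf image_groupoid t"
  unfolding image_labelled_def by (induction t) auto

lemma hr_ax_image_groupoid:
  assumes "(l, r) \<in> hr_ax G'"
  shows "(l, r) \<in> hr_ax image_groupoid"
proof -
  have [simp]: "sig image_groupoid = sig G'" "mu image_groupoid = mu G'"
    "rho_r image_groupoid = rho_r G'" "rho_l image_groupoid = rho_l G'"
    by (simp_all add: fun_eq_iff sig_def mu_def rho_r_def rho_l_def)
  from assms show ?thesis
    by cases (simp_all add: hr_ax.intros[where G=image_groupoid, simplified])
qed

lemma retract_image_labelled: "image_labelled t \<Longrightarrow> retract t = Upsilon pull_obj pull_mor t"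
  unfolding image_labelled_def
  by (induction t) (auto simp: retract_word_def subset_iff intro!: filter_True)

lemma Upsilon_pull: "image_labelled t \<Longrightarrow> Upsilon Fo Fm (Upsilon pull_obj pull_mor t) = t"
  unfolding image_labelled_def by (induction t) (auto simp: subset_iff intro!: map_idI)

definition retract_equiv :: "('p, 'n) tm \<Rightarrow> ('p, 'n) tm \<Rightarrow> bool" where
  "retract_equiv l r \<longleftrightarrow>
     touches_stray l = touches_stray r \<and> (\<not> touches_stray l \<longrightarrow> hreq G (retract l) (retract r))"

lemma retract_equiv_touches_stray:
  "src G' l = src G' r \<Longrightarrow> trg G' l = trg G' r \<Longrightarrow> list_ex stray (src G' l @ trg G' l) \<Longrightarrow>
    retract_equiv l r"
  unfolding retract_equiv_def using touches_strayI[of l] touches_strayI[of r] by auto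

lemma retract_equiv_image_labelled:
  assumes ax: "(l, r) \<in> hr_ax G'" and "src G' l = src G' r" "trg G' l = trg G' r"
    and wl: "wf G' l" and wr: "wf G' r"
    and l_image: "image_labelled l" and r_image: "image_labelled r"
  shows "retract_equiv l r"
proof -
  interpret image_inverse: object_injective_functor image_groupoid G pull_obj pull_mor
    by (rule pull_functor)
  let ?pull = "Upsilon pull_obj pull_mor"
  have wl': "wf image_groupoid l" and wr': "wf image_groupoid r"
    using wf_image_groupoid wl wr l_image r_image by auto
  note pull_l = image_inverse.wf_Upsilon[OF wl'] and pull_r = image_inverse.wf_Upsilon[OF wr']
  have "(?pull l, ?pull r) \<in> hr_ax G"
    using image_inverse.Upsilon_hr_ax[OF hr_ax_image_groupoid[OF ax] wl'] .
  then have "hreq G (?pull l) (?pull r)"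
    using pull_l pull_r assms(2,3) by (auto intro: hreq.ax)
  moreover have "\<not> touches_stray l" "\<not> touches_stray r"
    using retract_Upsilon pull_l pull_r Upsilon_pull[OF l_image] Upsilon_pull[OF r_image] by metis+
  ultimately show ?thesis
    unfolding retract_equiv_def using retract_image_labelled l_image r_image by simp
qed

lemma outer_labelled_src_trg:
  "wf G' t \<Longrightarrow> outer_labelled t \<Longrightarrow> set (src G' t) \<subseteq> outer_mor \<and> set (trg G' t) \<subseteq> outer_mor"
  unfolding outer_labelled_def by (induction t) auto

lemma retract_outer_labelled:
  "wf G' t \<Longrightarrow> outer_labelled t \<Longrightarrow> \<not> touches_stray t \<and> hreq G (retract t) (Id [])"
proof (induction t)
  case (Comp f g)
  then have f: "\<not> touches_stray f" "hreq G (retract f) (Id [])"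
    and g: "\<not> touches_stray g" "hreq G (retract g) (Id [])"
    by (auto simp: outer_labelled_def)
  moreover have "hreq G (retract f \<odot> retract g) (Id [] \<odot> Id [])"
    using hreq_wf_src_trg[OF f(2)] hreq_wf_src_trg[OF g(2)] by (intro hreq_comp f g) simp_all
  moreover have "hreq G (Id [] \<odot> Id []) (Id [])"
    by (rule hreq_Id_comp) simp_all
  ultimately show ?case
    by (auto intro: hreq.trans)
next
  case (Tens f g)
  then have "\<not> touches_stray f" "\<not> touches_stray g"
    and "hreq G (retract f \<diamond> retract g) (Id [] \<diamond> Id [])"
    by (auto simp: outer_labelled_def intro!: hreq.tens_cong)
  moreover have "hreq G (Id [] \<diamond> Id []) (Id [])"
    by (rule hreq_unit_tens) simp
  ultimately show ?case
    by (auto intro: hreq.trans)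
qed (use outer_labelled_src_trg in \<open>auto simp: outer_labelled_def list_ex_iff retract_word_def
  filter_empty_conv subset_iff hreq_Br_Nil_right hreq_BrInv_Nil_right intro: hreq.refl\<close>)

lemma retract_equiv_outer_labelled:
  "wf G' l \<Longrightarrow> wf G' r \<Longrightarrow> outer_labelled l \<Longrightarrow> outer_labelled r \<Longrightarrow> retract_equiv l r"
  unfolding retract_equiv_def using retract_outer_labelled[of l] retract_outer_labelled[of r]
  by (auto intro: hreq.trans hreq.sym)

lemma retract_equiv_uniform_labels:
  assumes "(l, r) \<in> hr_ax G'" "wf G' l" "wf G' r" "src G' l = src G' r" "trg G' l = trg G' r"
    and "image_labelled l \<and> image_labelled r \<or> outer_labelled l \<and> outer_labelled r"
  shows "retract_equiv l r"
  using assms retract_equiv_image_labelled retract_equiv_outer_labelled by blast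

lemma retract_equiv_retract_hr_ax:
  assumes "wf G' l" "wf G' r" "src G' l = src G' r" "trg G' l = trg G' r"
    and "\<not> touches_stray l \<Longrightarrow> \<not> touches_stray r \<Longrightarrow> (retract l, retract r) \<in> hr_ax G"
    and "touches_stray l \<longleftrightarrow> touches_stray r"
  shows "retract_equiv l r"
  using assms wf_retract[of l] wf_retract[of r] unfolding retract_equiv_def by (auto intro: hreq.ax)

lemma labels_not_stray:
  "wf G' t \<Longrightarrow> set2_tm t \<subseteq> image_mor \<union> outer_mor \<Longrightarrow>
    set (src G' t) \<subseteq> image_mor \<union> outer_mor \<and> set (trg G' t) \<subseteq> image_mor \<union> outer_mor
    \<and> \<not> touches_stray t"
proof (induction t)
  case (Eta i)
  then show ?case by (cases "i \<in> image_obj") (auto simp: list_ex_iff)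
next
  case (Lsm i)
  then show ?case by (cases "i \<in> image_obj") (auto simp: list_ex_iff)
qed (auto simp: list_ex_iff)

lemma retract_equiv_strip_ids:
  assumes "wf G' l" "wf G' r"
    and "set2_tm l \<subseteq> image_mor \<union> outer_mor" "set2_tm r \<subseteq> image_mor \<union> outer_mor"
    and "hreq G (strip_ids (retract l)) (strip_ids (retract r))"
  shows "retract_equiv l r"
proof -
  have "\<not> touches_stray l" "\<not> touches_stray r"
    using labels_not_stray assms by auto
  moreover from this have "wf G (retract l)" "wf G (retract r)"
    using wf_retract assms by auto
  then have "hreq G (retract l) (retract r)"
    using hreq_strip_ids assms(5) by (blast intro: hreq.trans hreq.sym)
  ultimately show ?thesis
    unfolding retract_equiv_def by simp
qed

lemma retract_equiv_generated_labels:
  assumes ax: "(l, r) \<in> hr_ax G'" and wl: "wf G' l" and wr: "wf G' r"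
    and s: "src G' l = src G' r" and t: "trg G' l = trg G' r"
    and N: "N \<subseteq> image_mor \<union> outer_mor"
    and objs: "set1_tm l \<union> set1_tm r \<subseteq> groupoid.dom G' ` N \<union> cod G' ` N"
    and mors: "set2_tm l \<union> set2_tm r \<subseteq> N \<union> idm G' ` (groupoid.dom G' ` N \<union> cod G' ` N)"
    and mixed: "N \<inter> image_mor \<noteq> {} \<Longrightarrow> N \<inter> outer_mor \<noteq> {} \<Longrightarrow>
      hreq G (strip_ids (retract l)) (strip_ids (retract r))"
  shows "retract_equiv l r"
proof (cases "N \<subseteq> image_mor")
  case True
  with objs mors have "image_labelled l" "image_labelled r"
    unfolding image_labelled_def
    by (blast intro: idm_image_obj dest: dom_image_mor cod_image_mor)+
  then show ?thesis
    by (rule retract_equiv_image_labelled[OF ax s t wl wr])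
next
  case not_image: False
  have obj: "groupoid.dom G' n \<in> Obj G'" "cod G' n \<in> Obj G'" if "n \<in> N" for n
    using that N by auto
  show ?thesis
  proof (cases "N \<subseteq> outer_mor")
    case True
    with objs mors obj have "outer_labelled l" "outer_labelled r"
      unfolding outer_labelled_def
      by (blast intro: idm_outer_mor dest: dom_outer_mor cod_outer_mor)+
    with wl wr show ?thesis
      by (rule retract_equiv_outer_labelled)
  next
    case False
    have "idm G' ` (groupoid.dom G' ` N \<union> cod G' ` N) \<subseteq> image_mor \<union> outer_mor"
      using N obj by (blast intro: idm_image_obj idm_outer_mor dest: dom_image_mor cod_image_mor
        dom_outer_mor cod_outer_mor)
    with N mors have "set2_tm l \<union> set2_tm r \<subseteq> image_mor \<union> outer_mor"
      by blast
    moreover have "N \<inter> image_mor \<noteq> {}" "N \<inter> outer_mor \<noteq> {}"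
      using N not_image False by auto
    ultimately show ?thesis
      using retract_equiv_strip_ids[OF wl wr] mixed by blast
  qed
qed

lemma hr_ax_retract_equiv:
  assumes ax: "(l, r) \<in> hr_ax G'" and wl: "wf G' l" and wr: "wf G' r"
    and s: "src G' l = src G' r" and t: "trg G' l = trg G' r"
  shows "retract_equiv l r"
proof (cases "list_ex stray (src G' l @ trg G' l)")
  case True
  with s t show ?thesis
    by (rule retract_equiv_touches_stray)
next
  case False
  then have boundary: "\<forall>n \<in> set (src G' l @ trg G' l). n \<in> image_mor \<or> n \<in> outer_mor"
    by (auto simp: list_ex_iff stray_def)
  from ax show ?thesis
  proof cases
    case (b_nat f g)
    then have "wf G' f" "wf G' g"
      using wl by auto
    then show ?thesis
      by (intro retract_equiv_retract_hr_ax[OF wl wr s t])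
        (use b_nat wf_retract[of f] wf_retract[of g]
          hr_ax.b_nat[where G=G and f="retract f" and g="retract g"]
          in \<open>auto intro: touches_strayI\<close>)
  next
    case (r_cop1 i j)
    with wl have "i \<in> Obj G'" "j \<in> Obj G'"
      by auto
    with r_cop1 show ?thesis
      by (intro retract_equiv_generated_labels[OF ax wl wr s t, of "{idm G' i, idm G' j}"])
        (auto simp: sig_def comp_ids_def tens_ids_def idm_outer_mor_iff
          intro: hreq.sym[OF G.hreq_Mult_Eta_left] G.hreq_Delta_Eta_right)
  next
    case (r_cop2 i j)
    with wl have "i \<in> Obj G'" "j \<in> Obj G'"
      by auto
    with r_cop2 show ?thesis
      by (intro retract_equiv_generated_labels[OF ax wl wr s t, of "{idm G' i, idm G' j}"])
        (auto simp: sig_def comp_ids_def tens_ids_def idm_outer_mor_iff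
          intro: G.hreq_Delta_Eta_left hreq.sym[OF G.hreq_Mult_Eta_right])
  next
    case (r_cop3 i j)
    with wl have "i \<in> Obj G'" "j \<in> Obj G'"
      by auto
    with r_cop3 show ?thesis
      by (intro retract_equiv_generated_labels[OF ax wl wr s t, of "{idm G' i, idm G' j}"])
        (auto simp: sig_def comp_ids_def tens_ids_def idm_outer_mor_iff
          intro: hreq.refl G.hreq_Eps_Eta)
  next
    case (r_cop4 i j)
    with wl have "i \<in> Obj G'" "j \<in> Obj G'"
      by auto
    with r_cop4 show ?thesis
      by (intro retract_equiv_generated_labels[OF ax wl wr s t, of "{idm G' i, idm G' j}"])
        (auto simp: sig_def comp_ids_def tens_ids_def idm_outer_mor_iff
          intro: G.hreq_Eps_Eta hreq.refl)
  next
    case (r_braid h g)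
    have "hreq G (strip_ids (retract l)) (strip_ids (retract r))"
      if "{g, h} \<inter> image_mor \<noteq> {}" "{g, h} \<inter> outer_mor \<noteq> {}"
    proof -
      from that consider "g \<in> image_mor" "h \<in> outer_mor" | "g \<in> outer_mor" "h \<in> image_mor"
        by (auto dest: outer_mor_not_image)
      then show ?thesis
      proof cases
        case 1
        with r_braid wl G.hreq_braid_collapse_right[of "pull_mor g"] show ?thesis
          by (auto simp: sig_def mu_def rho_l_def rho_r_def comp_ids_def tens_ids_def image_obj_neq)
      next
        case 2
        with r_braid wl G.hreq_braid_collapse_left[of "pull_mor h"] show ?thesis
          by (auto simp: sig_def mu_def rho_l_def rho_r_def comp_ids_def tens_ids_def image_obj_neq)
      qed
    qed
    with boundary r_braid wl show ?thesis
      by (intro retract_equiv_generated_labels[OF ax wl wr s t, of "{g, h}"]) auto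
  next
    case (i_right g h)
    then have g: "g \<in> Mor G'" "h \<in> Mor G'" "cod G' g = groupoid.dom G' h"
      using wl by auto
    have "h \<in> image_mor \<and> comp G' g h \<in> image_mor \<or> h \<in> outer_mor \<and> comp G' g h \<in> outer_mor"
      using boundary i_right g by (auto dest: cod_image_mor cod_outer_mor)
    then have "g \<in> image_mor \<and> h \<in> image_mor \<or> g \<in> outer_mor \<and> h \<in> outer_mor"
      using image_mor_cancel outer_mor_cancel g by blast
    then show ?thesis
      by (intro retract_equiv_uniform_labels[OF ax wl wr s t])
        (auto simp: i_right g image_labelled_def outer_labelled_def)
    \<comment> \<open>The remaining relations are structural, so that their retraction is again a relation,
      or have all their labels on the same side of the partition.\<close>
  qed ((rule retract_equiv_retract_hr_ax[OF wl wr s t];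
        (use wl in \<open>auto intro: hr_ax.intros touches_strayI\<close>; fail))
    | (rule retract_equiv_uniform_labels[OF ax wl wr s t];
        (use wl boundary in
          \<open>auto simp: image_labelled_def outer_labelled_def dest: outer_mor_not_image\<close>; fail)))+
qed

lemma hreq_retract_equiv: "hreq G' t u \<Longrightarrow> retract_equiv t u"
proof (induction rule: hreq.induct)
  case (ax l r)
  then show ?case
    by (rule hr_ax_retract_equiv)
next
  case (refl t)
  then show ?case
    unfolding retract_equiv_def using wf_retract[of t] by (auto intro: hreq.refl)
next
  case (comp_cong f f' g g')
  show ?case
  proof (cases "touches_stray (f \<odot> g)")
    case False
    then have "\<not> touches_stray f" "\<not> touches_stray g"
      by auto
    moreover have "trg G (retract g) = src G (retract f)"
      using comp_cong.hyps(3) wf_retract[of f] wf_retract[of g] calculation by simp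
    ultimately show ?thesis
      using comp_cong.IH unfolding retract_equiv_def by (auto intro: hreq_comp)
  qed (use comp_cong.IH in \<open>auto simp: retract_equiv_def\<close>)
qed (auto simp: retract_equiv_def intro: hreq.sym hreq.trans hreq.tens_cong)

lemma hreq_Upsilon_reflect:
  "wf G t \<Longrightarrow> wf G u \<Longrightarrow> hreq G' (Upsilon Fo Fm t) (Upsilon Fo Fm u) \<Longrightarrow> hreq G t u"
  using hreq_retract_equiv retract_Upsilon[of t] retract_Upsilon[of u] unfolding retract_equiv_def
  by metis

end

theorem proposition6p4:
  fixes G :: "('o, 'm) groupoid" and G' :: "('p, 'n) groupoid"
    and Fo :: "'o \<Rightarrow> 'p" and Fm :: "'m \<Rightarrow> 'n"
  assumes "is_groupoid G" and "is_groupoid G'"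
    and "is_functor G G' Fo Fm"
    and "inj_on Fo (Obj G)"
  shows "(\<forall>t. wf G t \<longrightarrow> wf G' (Upsilon Fo Fm t)
              \<and> src G' (Upsilon Fo Fm t) = map Fm (src G t)
              \<and> trg G' (Upsilon Fo Fm t) = map Fm (trg G t))
       \<and> (\<forall>t u. hreq G t u \<longrightarrow> hreq G' (Upsilon Fo Fm t) (Upsilon Fo Fm u))
       \<and> (inj_on Fm (Mor G) \<longrightarrow>
            (\<forall>t u. wf G t \<longrightarrow> wf G u \<longrightarrow> src G t = src G u \<longrightarrow> trg G t = trg G u \<longrightarrow>
               hreq G' (Upsilon Fo Fm t) (Upsilon Fo Fm u) \<longrightarrow> hreq G t u))"
proof -
  interpret object_injective_functor G G' Fo Fm
    using assms by unfold_locales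
  have "faithful_embedding G G' Fo Fm" if "inj_on Fm (Mor G)"
    using assms that by unfold_locales
  then show ?thesis
    using wf_Upsilon hreq_Upsilon faithful_embedding.hreq_Upsilon_reflect by blast
qed

end
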